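(* Let $A$ be a real $n\times n$ nonsingular skew-symmetric matrix ($A^t=-A$), $b\in\mathbb{R}^n$, and $x$ the solution of $Ax=b$. Let $m\ge 0$, $q_e=\lceil m/2\rceil$, $q_o=\lfloor m/2\rfloor$, and let $z\in\mathcal{K}_m(A,b)$ be written as $z=z_e+z_o$ with $z_e\in\mathcal{K}_{q_e}(A^2,b)$ and $z_o\in\mathcal{K}_{q_o}(A^2,Ab)$. Then \[\|z-x\|^2=\|z_o-x\|^2+\|z_e\|^2\quad\text{and}\quad \|b-Az\|^2=\|b-Az_o\|^2+\|Az_e\|^2.\]
   Context: For a matrix $B$, a vector $c$ and an integer $m\ge 0$, the Krylov subspace is $\mathcal{K}_m(B,c)=\operatorname{span}\{c,Bc,\ldots,B^{m-1}c\}$ (with $\mathcal{K}_0(B,c)=\{0\}$). $\|\cdot\|$ is the Euclidean norm. Every $z\in\mathcal{K}_m(A,b)$ admits such a decomposition by grouping even and odd powers of $A$. *)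

theory Defs
  imports "HOL-Analysis.Analysis"
begin

definition krylov :: "real^'n^'n \<Rightarrow> real^'n \<Rightarrow> nat \<Rightarrow> (real^'n) set" where
  "krylov B c m = span {((\<lambda>v. B *v v) ^^ k) c | k. k < m}"

end

theory Submission
  imports Defs
begin

text \<open>A skew-adjoint map f satisfies (f^i x) \<bullet> (f^j x) = (-1)^i (x \<bullet> f^(i+j) x), and
  for odd i + j this number equals its own negative. Hence the even iterates of x are
  orthogonal to the odd ones, and f swaps their spans. Since b = A x, the part ze lies in
  the span of the odd iterates of x and zo - x in that of the even ones; applying A swaps
  the two, so both identities are instances of Pythagoras.\<close>

lemma skew_matrix_inner:
  fixes A :: "real^'n^'n"
  assumes "transpose A = - A"
  shows "(A *v u) \<bullet> v = - (u \<bullet> (A *v v))"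
proof -
  have "(A *v u) \<bullet> v = u \<bullet> (transpose A *v v)"
    by (metis dot_lmul_matrix vector_transpose_matrix)
  also have "\<dots> = - (u \<bullet> (A *v v))"
  proof -
    have "(- A) *v v = - (A *v v)"
      by (simp add: vec_eq_iff matrix_vector_mult_def sum_negf)
    then show ?thesis
      using assms by simp
  qed
  finally show ?thesis .
qed

lemma skew_funpow_inner:
  fixes f :: "'a::real_inner \<Rightarrow> 'a"
  assumes skew: "\<And>u v. f u \<bullet> v = - (u \<bullet> f v)"
  shows "(f ^^ i) u \<bullet> (f ^^ j) v = (-1) ^ i * (u \<bullet> (f ^^ (i + j)) v)"
proof (induction i arbitrary: j)
  case 0
  then show ?case by simp
next
  case (Suc i)
  have "(f ^^ Suc i) u \<bullet> (f ^^ j) v = - ((f ^^ i) u \<bullet> (f ^^ Suc j) v)"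
    using skew by simp
  then show ?case
    using Suc.IH[of "Suc j"] by simp
qed

lemma skew_funpow_odd_orthogonal:
  fixes f :: "'a::real_inner \<Rightarrow> 'a"
  assumes skew: "\<And>u v. f u \<bullet> v = - (u \<bullet> f v)" and "odd (i + j)"
  shows "orthogonal ((f ^^ i) x) ((f ^^ j) x)"
proof -
  have "x \<bullet> (f ^^ (i + j)) x = (f ^^ (i + j)) x \<bullet> (f ^^ 0) x"
    by (simp add: inner_commute)
  also have "\<dots> = - (x \<bullet> (f ^^ (i + j)) x)"
    using skew_funpow_inner[OF skew, of "i + j" x 0] \<open>odd (i + j)\<close> by simp
  finally have "x \<bullet> (f ^^ (i + j)) x = 0"
    by simp
  then show ?thesis
    unfolding orthogonal_def using skew_funpow_inner[OF skew, of i x j] by simp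
qed

definition even_iterates :: "('a \<Rightarrow> 'a) \<Rightarrow> 'a \<Rightarrow> 'a set" where
  "even_iterates f x = range (\<lambda>k. (f ^^ (2 * k)) x)"

definition odd_iterates :: "('a \<Rightarrow> 'a) \<Rightarrow> 'a \<Rightarrow> 'a set" where
  "odd_iterates f x = range (\<lambda>k. (f ^^ (2 * k + 1)) x)"

lemma even_iterates_apply: "even_iterates f (f x) = odd_iterates f x"
  unfolding even_iterates_def odd_iterates_def by (simp add: funpow_Suc_right del: funpow.simps)

lemma odd_iterates_apply_subset: "odd_iterates f (f x) \<subseteq> even_iterates f x"
  unfolding even_iterates_def odd_iterates_def
  by (auto simp: funpow_Suc_right simp del: funpow.simps intro!: image_eqI[where x = "Suc _"])

lemma image_even_iterates: "f ` even_iterates f x = odd_iterates f x"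
  unfolding even_iterates_def odd_iterates_def by (auto simp: image_image)

lemma image_odd_iterates_subset: "f ` odd_iterates f x \<subseteq> even_iterates f x"
  unfolding even_iterates_def odd_iterates_def
  by (auto intro!: image_eqI[where x = "Suc _"])

lemma orthogonal_span_even_odd_iterates:
  fixes f :: "'a::real_inner \<Rightarrow> 'a"
  assumes skew: "\<And>u v. f u \<bullet> v = - (u \<bullet> f v)"
    and u: "u \<in> span (even_iterates f x)" and v: "v \<in> span (odd_iterates f x)"
  shows "orthogonal u v"
proof -
  have "orthogonal v' u" if "v' \<in> odd_iterates f x" for v'
  proof (rule orthogonal_to_span[OF u])
    fix u' assume "u' \<in> even_iterates f x"
    with that obtain i j where "v' = (f ^^ (2 * j + 1)) x" "u' = (f ^^ (2 * i)) x"
      unfolding even_iterates_def odd_iterates_def by blast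
    then show "orthogonal v' u'"
      using skew_funpow_odd_orthogonal[OF skew, of "2 * j + 1" "2 * i" x] by simp
  qed
  then show ?thesis
    using orthogonal_to_span[OF v] orthogonal_commute by metis
qed

lemma skew_even_odd_Pythagorean:
  fixes f :: "'a::real_inner \<Rightarrow> 'a"
  assumes lin: "linear f" and skew: "\<And>u v. f u \<bullet> v = - (u \<bullet> f v)"
    and u: "u \<in> span (even_iterates f x)" and v: "v \<in> span (odd_iterates f x)"
  shows "(norm (u + v))\<^sup>2 = (norm u)\<^sup>2 + (norm v)\<^sup>2"
    and "(norm (f (u + v)))\<^sup>2 = (norm (f u))\<^sup>2 + (norm (f v))\<^sup>2"
proof -
  have fv: "f v \<in> span (even_iterates f x)"
    using imageI[OF v, of f] span_mono[OF image_odd_iterates_subset[of f x]]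
    unfolding span_linear_image[OF lin, symmetric] by blast
  have fu: "f u \<in> span (odd_iterates f x)"
    using imageI[OF u, of f] unfolding span_linear_image[OF lin, symmetric] image_even_iterates .
  have "orthogonal (f u) (f v)"
    using orthogonal_span_even_odd_iterates[OF skew fv fu] by (simp add: orthogonal_commute)
  then show "(norm (f (u + v)))\<^sup>2 = (norm (f u))\<^sup>2 + (norm (f v))\<^sup>2"
    by (simp add: linear_add[OF lin] norm_add_Pythagorean)
  show "(norm (u + v))\<^sup>2 = (norm u)\<^sup>2 + (norm v)\<^sup>2"
    using orthogonal_span_even_odd_iterates[OF skew u v] by (rule norm_add_Pythagorean)
qed

lemma krylov_square_subset_even_iterates:
  fixes A :: "real^'n^'n"
  shows "krylov (A ** A) c q \<subseteq> span (even_iterates ((*v) A) c)"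
proof -
  have "((\<lambda>v. (A ** A) *v v) ^^ k) c = ((*v) A ^^ (2 * k)) c" for k
    by (induction k) (auto simp: matrix_vector_mul_assoc[symmetric])
  then show ?thesis
    unfolding krylov_def even_iterates_def by (auto intro!: span_mono)
qed

lemma krylov_square_apply_subset_odd_iterates:
  fixes A :: "real^'n^'n"
  shows "krylov (A ** A) (A *v x) q \<subseteq> span (odd_iterates ((*v) A) x)"
  using krylov_square_subset_even_iterates[of A "A *v x" q]
  by (simp add: even_iterates_apply[of "(*v) A", simplified])

lemma krylov_square_apply2_subset_even_iterates:
  fixes A :: "real^'n^'n"
  shows "krylov (A ** A) (A *v (A *v x)) q \<subseteq> span (even_iterates ((*v) A) x)"
  using krylov_square_apply_subset_odd_iterates[of A "A *v x" q]
    span_mono[OF odd_iterates_apply_subset[of "(*v) A" x]]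
  by auto

theorem theorem2:
  fixes A :: "real^'n^'n" and b x z ze zo :: "real^'n" and m :: nat
  assumes "invertible A"
    and "transpose A = - A"
    and "A *v x = b"
    and "z \<in> krylov A b m"
    and "z = ze + zo"
    and "ze \<in> krylov (A ** A) b ((m + 1) div 2)"
    and "zo \<in> krylov (A ** A) (A *v b) (m div 2)"
  shows "(norm (z - x))\<^sup>2 = (norm (zo - x))\<^sup>2 + (norm ze)\<^sup>2
       \<and> (norm (b - A *v z))\<^sup>2 = (norm (b - A *v zo))\<^sup>2 + (norm (A *v ze))\<^sup>2"
proof -
  define f where "f = (*v) A"
  have lin: "linear f" and skew: "\<And>u v. f u \<bullet> v = - (u \<bullet> f v)"
    using skew_matrix_inner[OF assms(2)] by (simp_all add: f_def)
  have ze: "ze \<in> span (odd_iterates f x)"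
    using assms(3,6) krylov_square_apply_subset_odd_iterates unfolding f_def by blast
  have "zo \<in> span (even_iterates f x)"
    using assms(3,7) krylov_square_apply2_subset_even_iterates unfolding f_def by blast
  moreover have "x \<in> span (even_iterates f x)"
    unfolding even_iterates_def by (rule span_base) (auto intro: image_eqI[where x = 0])
  ultimately have zo_x: "zo - x \<in> span (even_iterates f x)"
    by (rule span_diff)
  have "z - x = (zo - x) + ze" and "b - A *v z = - f ((zo - x) + ze)"
    and "b - A *v zo = - f (zo - x)"
    using assms(3,5) by (simp_all add: f_def algebra_simps matrix_vector_right_distrib
        matrix_vector_mult_diff_distrib)
  then show ?thesis
    using skew_even_odd_Pythagorean[OF lin skew zo_x ze] unfolding f_def
    by (simp only: norm_minus_cancel)
qed

end
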